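(* For every graph $G$ and every integer $m\ge 1$, the super subdivision of $G$ (obtained by replacing every edge of $G$ by a complete bipartite graph $K_{2,m}$) admits a uniform WIASI.
   Context: All graphs are finite, simple and without isolated vertices. $\mathbb{N}_0$ denotes the set of non-negative integers; for finite $A,B\subseteq\mathbb{N}_0$, $A+B=\{a+b: a\in A, b\in B\}$. An integer additive set-indexer (IASI) of a graph $G$ is an injective map $f$ from $V(G)$ to the finite non-empty subsets of $\mathbb{N}_0$ such that the induced edge map $f^+(uv)=f(u)+f(v)$ is injective on $E(G)$. A weak IASI (WIASI) is an IASI $f$ with $|f^+(uv)|=\max(|f(u)|,|f(v)|)$ for every edge $uv$. For an integer $k\ge 2$, a WIASI $f$ is $k$-uniform if $|f^+(e)|=k$ for every edge $e$; $G$ admits a uniform WIASI (UWIASI) if it admits a $k$-uniform WIASI for some integer $k\ge 2$. In the super subdivision, each edge $uv$ of $G$ is replaced by $m$ new vertices $x_1,\dots,x_m$, each adjacent to both $u$ and $v$ (the edge $uv$ itself being removed), so that $u,v$ form the part of size $2$ of a $K_{2,m}$. *)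

theory Defs
  imports Main
begin

definition graph :: "'v set \<Rightarrow> 'v set set \<Rightarrow> bool" where
  "graph V E \<longleftrightarrow> finite V \<and> (\<forall>e\<in>E. e \<subseteq> V \<and> card e = 2) \<and> (\<forall>v\<in>V. \<exists>e\<in>E. v \<in> e)"

definition sumset :: "nat set \<Rightarrow> nat set \<Rightarrow> nat set" where
  "sumset A B = {a + b | a b. a \<in> A \<and> b \<in> B}"

text \<open>Integer additive set-indexer: injective vertex labelling by finite nonempty subsets of N0,
  whose induced edge map {u,v} |-> f u + f v is injective on E.\<close>
definition IASI :: "'v set \<Rightarrow> 'v set set \<Rightarrow> ('v \<Rightarrow> nat set) \<Rightarrow> bool" where
  "IASI V E f \<longleftrightarrow> inj_on f V \<and> (\<forall>v\<in>V. finite (f v) \<and> f v \<noteq> {}) \<and>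
     (\<forall>u v u' v'. {u, v} \<in> E \<longrightarrow> {u', v'} \<in> E \<longrightarrow>
        sumset (f u) (f v) = sumset (f u') (f v') \<longrightarrow> {u, v} = {u', v'})"

definition WIASI :: "'v set \<Rightarrow> 'v set set \<Rightarrow> ('v \<Rightarrow> nat set) \<Rightarrow> bool" where
  "WIASI V E f \<longleftrightarrow> IASI V E f \<and>
     (\<forall>u v. {u, v} \<in> E \<longrightarrow> card (sumset (f u) (f v)) = max (card (f u)) (card (f v)))"

definition k_uniform_WIASI :: "nat \<Rightarrow> 'v set \<Rightarrow> 'v set set \<Rightarrow> ('v \<Rightarrow> nat set) \<Rightarrow> bool" where
  "k_uniform_WIASI k V E f \<longleftrightarrow> WIASI V E f \<and>
     (\<forall>u v. {u, v} \<in> E \<longrightarrow> card (sumset (f u) (f v)) = k)"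

definition admits_UWIASI :: "'v set \<Rightarrow> 'v set set \<Rightarrow> bool" where
  "admits_UWIASI V E \<longleftrightarrow> (\<exists>k::nat. k \<ge> 2 \<and> (\<exists>f. k_uniform_WIASI k V E f))"

text \<open>Super subdivision: each edge e is replaced by m new vertices Inr (e,i), i < m,
  each adjacent to both endpoints of e.\<close>
definition ss_vertices :: "'v set \<Rightarrow> 'v set set \<Rightarrow> nat \<Rightarrow> ('v + 'v set \<times> nat) set" where
  "ss_vertices V E m = Inl ` V \<union> {Inr (e, i) | e i. e \<in> E \<and> i < m}"

definition ss_edges :: "'v set \<Rightarrow> 'v set set \<Rightarrow> nat \<Rightarrow> ('v + 'v set \<times> nat) set set" where
  "ss_edges V E m = {{Inl u, Inr (e, i)} | u e i. e \<in> E \<and> u \<in> e \<and> i < m}"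

end

theory Submission
  imports Defs
begin

(* The super subdivision of G is bipartite: every edge joins an original
   vertex Inl x to a new vertex Inr (e,i).  Any bipartite graph with finite sides A, B
   admits a 2-uniform WIASI: give Inl x the singleton {h x} and Inr p the pair {0, d p},
   where h is injective on A and d is injective and positive on B.  The edge label is
   then {h x, h x + d p}, a 2-element set from which h x (its minimum) and d p (the gap)
   can be read off, so distinct edges get distinct labels and every edge label has size
   2 = max of the two vertex label sizes. *)

lemma sumset_commute: "sumset A B = sumset B A"
  unfolding sumset_def by (auto simp: add.commute) (metis add.commute)+

lemma sumset_singleton_pair: "sumset {a} {0, d} = {a, a + d}"
  unfolding sumset_def by auto

lemma shifted_pair_eq_iff:
  fixes a d a' d' :: nat
  assumes "d > 0" and "d' > 0"
  shows "{a, a + d} = {a', a' + d'} \<longleftrightarrow> a = a' \<and> d = d'"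
  using assms by (auto simp: doubleton_eq_iff)

definition bipartite_labelling :: "('a \<Rightarrow> nat) \<Rightarrow> ('b \<Rightarrow> nat) \<Rightarrow> 'a + 'b \<Rightarrow> nat set" where
  "bipartite_labelling h d = case_sum (\<lambda>x. {h x}) (\<lambda>p. {0, d p})"

lemma bipartite_labelling_edge:
  assumes "{u, v} = {Inl x, Inr p}"
  shows "sumset (bipartite_labelling h d u) (bipartite_labelling h d v) = {h x, h x + d p}"
proof -
  from assms have "u = Inl x \<and> v = Inr p \<or> u = Inr p \<and> v = Inl x"
    by (auto simp: doubleton_eq_iff)
  then show ?thesis
    by (auto simp: bipartite_labelling_def sumset_singleton_pair sumset_commute[of "{0, _}"])
qed

lemma bipartite_labelling_edge_max_card:
  assumes "{u, v} = {Inl x, Inr p}" and "d p > 0"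
  shows "max (card (bipartite_labelling h d u)) (card (bipartite_labelling h d v)) = 2"
proof -
  from assms(1) have "u = Inl x \<and> v = Inr p \<or> u = Inr p \<and> v = Inl x"
    by (auto simp: doubleton_eq_iff)
  then show ?thesis using assms(2) by (auto simp: bipartite_labelling_def)
qed

(* Left labels are singletons and right labels are pairs, so only same-side vertices can clash. *)
lemma bipartite_labelling_inj_on:
  assumes "inj_on h A" and "inj_on d B" and "\<forall>p\<in>B. d p > 0"
  shows "inj_on (bipartite_labelling h d) (Inl ` A \<union> Inr ` B)"
proof (rule inj_onI)
  fix a b
  assume "a \<in> Inl ` A \<union> Inr ` B" "b \<in> Inl ` A \<union> Inr ` B"
    and eq: "bipartite_labelling h d a = bipartite_labelling h d b"
  then consider (left) x y where "a = Inl x" "b = Inl y" "x \<in> A" "y \<in> A"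
    | (right) p q where "a = Inr p" "b = Inr q" "p \<in> B" "q \<in> B"
    | (mixed) "card (bipartite_labelling h d a) \<noteq> card (bipartite_labelling h d b)"
    using assms(3) by (auto simp: bipartite_labelling_def)
  then show "a = b"
  proof cases
    case left
    then show ?thesis using eq assms(1) by (auto simp: bipartite_labelling_def inj_on_def)
  next
    case right
    then have "d p = d q" using eq assms(3) by (auto simp: bipartite_labelling_def doubleton_eq_iff)
    then show ?thesis using right assms(2) by (auto simp: inj_on_def)
  next
    case mixed
    then show ?thesis using eq by simp
  qed
qed

lemma bipartite_2_uniform_WIASI:
  assumes "finite A" and "finite B"
    and bipartite: "\<forall>e\<in>F. \<exists>x\<in>A. \<exists>p\<in>B. e = {Inl x, Inr p}"
  shows "\<exists>f. k_uniform_WIASI 2 (Inl ` A \<union> Inr ` B) F f"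
proof -
  obtain h :: "'a \<Rightarrow> nat" where h: "inj_on h A"
    using finite_imp_inj_to_nat_seg[OF assms(1)] by metis
  obtain g :: "'b \<Rightarrow> nat" where g: "inj_on g B"
    using finite_imp_inj_to_nat_seg[OF assms(2)] by metis
  define d where "d p = g p + 1" for p
  have d_inj: "inj_on d B" using g by (auto simp: d_def inj_on_def)
  have d_pos: "\<forall>p\<in>B. d p > 0" by (simp add: d_def)
  define f where "f = bipartite_labelling h d"
  have edge_label: "\<exists>x\<in>A. \<exists>p\<in>B. {u, v} = {Inl x, Inr p} \<and>
      sumset (f u) (f v) = {h x, h x + d p} \<and> max (card (f u)) (card (f v)) = 2"
    if "{u, v} \<in> F" for u v
    using bipartite that d_pos
    by (metis f_def bipartite_labelling_edge bipartite_labelling_edge_max_card)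
  have "k_uniform_WIASI 2 (Inl ` A \<union> Inr ` B) F f"
    unfolding k_uniform_WIASI_def WIASI_def IASI_def
  proof (intro conjI allI impI ballI)
    show "inj_on f (Inl ` A \<union> Inr ` B)"
      unfolding f_def using bipartite_labelling_inj_on[OF h d_inj d_pos] .
  next
    fix v
    show "finite (f v)" and "f v \<noteq> {}"
      by (cases v; simp add: f_def bipartite_labelling_def)+
  next
    fix u v u' v'
    assume "{u, v} \<in> F" "{u', v'} \<in> F" and eq: "sumset (f u) (f v) = sumset (f u') (f v')"
    then obtain x p x' p' where "x \<in> A" "p \<in> B" "x' \<in> A" "p' \<in> B"
      and "{u, v} = {Inl x, Inr p}" "{u', v'} = {Inl x', Inr p'}"
      and "{h x, h x + d p} = {h x', h x' + d p'}"
      using edge_label by metis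
    then show "{u, v} = {u', v'}"
      using d_pos h d_inj by (auto simp: shifted_pair_eq_iff inj_on_def)
  next
    fix u v
    assume "{u, v} \<in> F"
    then show "card (sumset (f u) (f v)) = max (card (f u)) (card (f v))"
      and "card (sumset (f u) (f v)) = 2"
      using edge_label d_pos by fastforce+
  qed
  then show ?thesis by blast
qed

lemma ss_vertices_bipartite: "ss_vertices V E m = Inl ` V \<union> Inr ` (E \<times> {..<m})"
  unfolding ss_vertices_def by auto

lemma ss_edges_bipartite:
  assumes "E \<subseteq> Pow V"
  shows "\<forall>e\<in>ss_edges V E m. \<exists>x\<in>V. \<exists>p\<in>E \<times> {..<m}. e = {Inl x, Inr p}"
  using assms unfolding ss_edges_def by blast

theorem mainTheorem16:
  fixes V :: "'v set" and E :: "'v set set" and m :: nat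
  assumes "graph V E" and "m \<ge> 1"
  shows "admits_UWIASI (ss_vertices V E m) (ss_edges V E m)"
proof -
  have "finite V" and E_sub: "E \<subseteq> Pow V"
    using assms(1) unfolding graph_def by auto
  then have "finite (E \<times> {..<m})" by (simp add: finite_subset)
  with \<open>finite V\<close> obtain f where "k_uniform_WIASI 2 (ss_vertices V E m) (ss_edges V E m) f"
    using bipartite_2_uniform_WIASI[OF _ _ ss_edges_bipartite[OF E_sub]]
    unfolding ss_vertices_bipartite by blast
  then show ?thesis unfolding admits_UWIASI_def by blast
qed

end
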